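(* Let $\mathbb{F}$ be an arbitrary field. Let $P(t,y)\in\mathbb{F}[[t,y]]$ and $\varphi(t)\in\mathbb{F}[[t]]$ satisfy $\varphi(0)=0$, $P(t,\varphi(t))=0$ and $\partial_y P(0,0)=\alpha\neq 0$. Then $$\varphi(t) = \sum_{m\ge 1}\frac{1}{\alpha^{m+1}}\,[y^{m-1}]\Big(\partial_yP(t,y)\cdot(\alpha y - P(t,y))^m\Big).$$ If moreover $\mathbb{F}$ has characteristic zero, then also $$\varphi(t) = \sum_{m\ge 1}\frac{1}{m\,\alpha^{m}}\,[y^{m-1}]\Big((\alpha y - P(t,y))^m\Big).$$ (Both sums converge in the $t$-adic topology of $\mathbb{F}[[t]]$.)
   Context: For a power series $G(t,y)\in\mathbb{F}[[t,y]]$, $[y^a](G)\in\mathbb{F}[[t]]$ denotes the coefficient of $y^a$ when $G$ is viewed as a power series in $y$ with coefficients in $\mathbb{F}[[t]]$. *)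

theory Defs
  imports "HOL-Computational_Algebra.Formal_Power_Series"
begin

text \<open>A bivariate series in F[[t,y]] is represented as an element of (F[[t]])[[y]],
  i.e. of type 'a fps fps: the outer variable is y, coefficients are series in t.
  F[[t]] carries the t-adic metric from the library.\<close>

definition subst_y :: "'a::comm_ring_1 fps fps \<Rightarrow> 'a fps \<Rightarrow> 'a fps" where
  "subst_y P \<phi> = (\<Sum>n. fps_nth P n * \<phi> ^ n)"

end

theory Submission
  imports Defs
begin

(* Normalise to D = P / \<alpha>, so that D(0,0) = 0 and \<partial>\<^sub>yD(0,0) = 1, and put G = y - D, which lies
   in the ideal (t, y^2). Since D(t,\<phi>) = 0, the factor theorem gives D = (y - \<phi>) E with E
   invertible, i.e. y = D W + \<phi>. Multiplying by D' G^m and using the identity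
   [y^m] (G' G^m) = [y^(m+1)] G^(m+1), the partial sums of the first series telescope to
   \<phi> - [y^(M+1)] (\<phi> G^(M+1)) - [y^M] (W D' G^(M+1)), and both remainders are O(t^(M/2)) because
   G^(M+1) lies in (t, y^2)^(M+1). In characteristic zero,
   [y^m] (G' G^(m+1)) = (m+1)/(m+2) [y^(m+1)] G^(m+2), and summation by parts turns the first
   series into the second. *)

unbundle fps_syntax

lemma sum_mset_fiber_nth_eq_nth_0:
  fixes M :: "nat multiset"
  assumes "j < size M"
  shows "(\<Sum>v | mset v = M. v ! j) = (\<Sum>v | mset v = M. v ! 0)"
proof -
  define \<sigma> where "\<sigma> v = v[0 := v ! j, j := v ! 0]" for v :: "nat list"
  have "\<sigma> v \<in> {v. mset v = M} \<and> \<sigma> (\<sigma> v) = v \<and> \<sigma> v ! 0 = v ! j" if "mset v = M" for v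
  proof -
    have j: "j < length v" "0 < length v" using assms that by auto
    have "\<sigma> (\<sigma> v) = v"
      using j by (intro nth_equalityI) (auto simp: \<sigma>_def nth_list_update)
    then show ?thesis
      using j that mset_swap[of j v 0] by (auto simp: \<sigma>_def nth_list_update)
  qed
  then show ?thesis
    by (intro sum.reindex_bij_witness[of _ \<sigma> \<sigma>]) auto
qed

lemma size_mult_sum_mset_fiber_nth_0:
  fixes M :: "nat multiset"
  shows "size M * (\<Sum>v | mset v = M. v ! 0) = sum_mset M * card {v. mset v = M}"
proof -
  have "size M * (\<Sum>v | mset v = M. v ! 0) = (\<Sum>j<size M. \<Sum>v | mset v = M. v ! 0)"
    by simp
  also have "\<dots> = (\<Sum>j<size M. \<Sum>v | mset v = M. v ! j)"
    by (intro sum.cong refl sum_mset_fiber_nth_eq_nth_0[symmetric]) simp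
  also have "\<dots> = (\<Sum>v | mset v = M. \<Sum>j<size M. v ! j)"
    by (rule sum.swap)
  also have "\<dots> = (\<Sum>v | mset v = M. sum_mset M)"
    by (rule sum.cong) (auto simp: sum_mset_sum_list sum_list_sum_nth atLeast0LessThan)
  finally show ?thesis
    by (simp add: mult.commute)
qed

lemma sum_natpermute_diag_nth_0_weighted:
  fixes w :: "nat multiset \<Rightarrow> 'b::comm_semiring_1"
  assumes "n > 0"
  shows "(\<Sum>v\<in>natpermute n n. of_nat (v ! 0) * w (mset v)) = (\<Sum>v\<in>natpermute n n. w (mset v))"
proof -
  let ?A = "natpermute n n"
  have fiberwise: "(\<Sum>v | v \<in> ?A \<and> mset v = M. of_nat (v ! 0) * w (mset v))
      = (\<Sum>v | v \<in> ?A \<and> mset v = M. w (mset v))" if "M \<in> mset ` ?A" for M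
  proof -
    have M: "size M = n" "sum_mset M = n"
      using that by (auto simp: natpermute_def sum_mset_sum_list)
    then have fiber: "{v. v \<in> ?A \<and> mset v = M} = {v. mset v = M}"
      by (auto simp: natpermute_def sum_mset_sum_list[symmetric] simp flip: size_mset)
    have "(\<Sum>v | mset v = M. v ! 0) = card {v. mset v = M}"
      using size_mult_sum_mset_fiber_nth_0[of M] M assms by simp
    then have "(\<Sum>v | mset v = M. of_nat (v ! 0) * w M) = (\<Sum>v | mset v = M. w M)"
      by (simp flip: sum_distrib_right of_nat_sum)
    moreover have "(\<Sum>v | mset v = M. g v (mset v)) = (\<Sum>v | mset v = M. g v M)"
      for g :: "nat list \<Rightarrow> nat multiset \<Rightarrow> 'b"
      by (rule sum.cong) auto
    ultimately show ?thesis
      unfolding fiber by simp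
  qed
  have "(\<Sum>v\<in>?A. of_nat (v ! 0) * w (mset v))
      = (\<Sum>M\<in>mset ` ?A. \<Sum>v | v \<in> ?A \<and> mset v = M. of_nat (v ! 0) * w (mset v))"
    by (rule sum.image_gen[OF natpermute_finite])
  also have "\<dots> = (\<Sum>M\<in>mset ` ?A. \<Sum>v | v \<in> ?A \<and> mset v = M. w (mset v))"
    by (rule sum.cong[OF refl fiberwise])
  also have "\<dots> = (\<Sum>v\<in>?A. w (mset v))"
    by (rule sum.image_gen[OF natpermute_finite, symmetric])
  finally show ?thesis .
qed

(* Multiplied by m + 1, this is [y^m] of the derivative of G^(m+1). To avoid dividing by m + 1,
   expand both sides over the compositions of m + 1 into m + 1 parts and group these by their
   multiset of parts: on each such class the first part has average 1. *)
lemma fps_deriv_mult_power_nth: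
  fixes G :: "'b::comm_ring_1 fps"
  shows "(fps_deriv G * G ^ m) $ m = (G ^ Suc m) $ Suc m"
proof -
  define a where "a j = (if j = 0 then fps_X * fps_deriv G else G)" for j :: nat
  define w where "w M = prod_mset (image_mset (fps_nth G) M)" for M
  have prod_G: "(\<Prod>j\<in>{0..m}. G $ (v ! j)) = w (mset v)" if "v \<in> natpermute (Suc m) (Suc m)" for v
  proof -
    have "w (mset v) = prod_list (map (fps_nth G) v)"
      by (simp add: w_def prod_mset_prod_list flip: mset_map)
    also have "\<dots> = (\<Prod>j\<in>{0..<length v}. G $ (v ! j))"
      by (simp add: prod.list_conv_set_nth)
    finally show ?thesis
      using that by (simp add: natpermute_def atLeastLessThanSuc_atLeastAtMost)
  qed
  have prod_a: "(\<Prod>j\<in>{0..m}. a j $ (v ! j)) = of_nat (v ! 0) * w (mset v)"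
    if "v \<in> natpermute (Suc m) (Suc m)" for v
  proof -
    have "a j $ k = (if j = 0 then of_nat k else 1) * G $ k" for j k
      by (cases k) (simp_all add: a_def)
    then show ?thesis
      by (simp add: prod.distrib prod_G[OF that])
  qed
  have "prod a {0..m} = fps_X * (fps_deriv G * G ^ m)"
    by (simp add: a_def prod.atLeast_Suc_atMost mult.assoc)
  then have "(fps_deriv G * G ^ m) $ m = (prod a {0..m}) $ Suc m"
    by simp
  also have "\<dots> = (\<Sum>v\<in>natpermute (Suc m) (m + 1). \<Prod>j\<in>{0..m}. a j $ (v ! j))"
    by (rule fps_prod_nth)
  also have "\<dots> = (\<Sum>v\<in>natpermute (Suc m) (Suc m). of_nat (v ! 0) * w (mset v))"
    by (simp add: prod_a)
  also have "\<dots> = (\<Sum>v\<in>natpermute (Suc m) (Suc m). w (mset v))"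
    by (rule sum_natpermute_diag_nth_0_weighted) simp
  also have "\<dots> = (\<Sum>v\<in>natpermute (Suc m) (m + 1). \<Prod>j\<in>{0..m}. G $ (v ! j))"
    by (simp add: prod_G)
  also have "\<dots> = (G ^ Suc m) $ Suc m"
    by (rule fps_power_nth_Suc[symmetric])
  finally show ?thesis .
qed

lemma lagrange_partial_sum_eq:
  fixes D W :: "'b::comm_ring_1 fps"
  assumes "D * W = fps_X - fps_const c"
  shows "(\<Sum>m<M. (fps_deriv D * (fps_X - D) ^ Suc m) $ m)
    = c - (fps_const c * (fps_X - D) ^ Suc M) $ Suc M - (W * fps_deriv D * (fps_X - D) ^ Suc M) $ M"
proof -
  define G where "G = fps_X - D"
  define \<beta> where "\<beta> m = (fps_X * (W * fps_deriv D * G ^ m)) $ m" for m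
  define u where "u m = (G ^ m) $ m" for m
  have step: "(fps_X * fps_deriv D * G ^ m) $ m = (\<beta> m - \<beta> (Suc m)) + c * (u m - u (Suc m))" for m
  proof -
    have "fps_X * fps_deriv D * G ^ m = (D * W + fps_const c) * fps_deriv D * G ^ m"
      using assms by simp
    also have "\<dots> = fps_X * (W * fps_deriv D * G ^ m) - W * fps_deriv D * G ^ Suc m
        + fps_const c * (G ^ m - fps_deriv G * G ^ m)"
      by (simp add: G_def algebra_simps)
    finally have "(fps_X * fps_deriv D * G ^ m) $ m = (fps_X * (W * fps_deriv D * G ^ m)) $ m
        - (W * fps_deriv D * G ^ Suc m) $ m + c * ((G ^ m) $ m - (fps_deriv G * G ^ m) $ m)"
      by (simp only: fps_add_nth fps_sub_nth fps_mult_left_const_nth)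
    then show ?thesis
      by (simp only: \<beta>_def u_def fps_deriv_mult_power_nth fps_X_mult_nth nat.distinct diff_Suc_1
          if_False)
  qed
  have "(\<Sum>m<M. (fps_deriv D * G ^ Suc m) $ m) = (\<Sum>m<Suc M. (fps_X * fps_deriv D * G ^ m) $ m)"
    by (simp add: sum.lessThan_Suc_shift mult.assoc del: sum.lessThan_Suc)
  also have "\<dots> = (\<Sum>m<Suc M. \<beta> m - \<beta> (Suc m)) + c * (\<Sum>m<Suc M. u m - u (Suc m))"
    by (simp only: step sum.distrib sum_distrib_left)
  also have "\<dots> = c - c * u (Suc M) - \<beta> (Suc M)"
    by (simp only: sum_lessThan_telescope') (simp add: \<beta>_def u_def algebra_simps)
  finally show ?thesis
    by (simp add: G_def \<beta>_def u_def mult.assoc)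
qed

(* F $ n $ i is the coefficient of t^i y^n, which gets weight 2 i + n; weighted order \<ge> 2 is
   membership in the ideal (t, y^2). *)
definition weighted_order_ge :: "nat \<Rightarrow> 'a::zero fps fps \<Rightarrow> bool" where
  "weighted_order_ge k F \<longleftrightarrow> (\<forall>n i. 2 * i + n < k \<longrightarrow> F $ n $ i = 0)"

lemma weighted_order_ge_0 [simp]: "weighted_order_ge 0 F"
  by (simp add: weighted_order_ge_def)

lemma weighted_order_ge_mult:
  fixes F H :: "'a::comm_semiring_1 fps fps"
  assumes "weighted_order_ge a F" and "weighted_order_ge b H"
  shows "weighted_order_ge (a + b) (F * H)"
  unfolding weighted_order_ge_def
proof (intro allI impI)
  fix n i :: nat
  assume ni: "2 * i + n < a + b"
  have "F $ j $ l * H $ (n - j) $ (i - l) = 0" if "j \<le> n" "l \<le> i" for j l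
  proof (cases "2 * l + j < a")
    case True
    then show ?thesis using assms(1) by (simp add: weighted_order_ge_def)
  next
    case False
    then have "2 * (i - l) + (n - j) < b" using ni that by linarith
    then show ?thesis using assms(2) by (simp add: weighted_order_ge_def)
  qed
  then show "(F * H) $ n $ i = 0"
    by (simp add: fps_mult_nth fps_sum_nth)
qed

lemma weighted_order_ge_power:
  fixes G :: "'a::comm_semiring_1 fps fps"
  assumes "weighted_order_ge k G"
  shows "weighted_order_ge (k * m) (G ^ m)"
proof (induction m)
  case (Suc m)
  then show ?case
    using weighted_order_ge_mult[OF assms Suc.IH] by simp
qed simp

lemma weighted_order_ge_mult_power_nth:
  fixes G X :: "'a::comm_semiring_1 fps fps"
  assumes "weighted_order_ge k G" and "2 * i + n < k * m"
  shows "(X * G ^ m) $ n $ i = 0"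
proof -
  have "weighted_order_ge (0 + k * m) (X * G ^ m)"
    by (intro weighted_order_ge_mult weighted_order_ge_0 weighted_order_ge_power assms(1))
  then show ?thesis
    using assms(2) by (simp add: weighted_order_ge_def)
qed

lemma fps_sums_if_partial_sums_nth_stable:
  fixes f :: "nat \<Rightarrow> 'a::ab_group_add fps"
  assumes "\<And>i M. N i \<le> M \<Longrightarrow> (\<Sum>m<M. f m) $ i = s $ i"
  shows "f sums s"
  unfolding sums_def
proof (rule tendsto_fpsI)
  show "\<forall>\<^sub>F M in sequentially. (\<Sum>m<M. f m) $ i = s $ i" for i
    unfolding eventually_sequentially using assms by blast
qed

lemma fps_mult_power_nth_below:
  fixes \<phi> f :: "'a::comm_ring_1 fps"
  assumes "\<phi> $ 0 = 0" and "k < n"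
  shows "(f * \<phi> ^ n) $ k = 0"
  using assms startsby_zero_power_prefix[OF assms(1)] by (simp add: fps_mult_nth)

lemma subst_y_nth:
  fixes P :: "'a::comm_ring_1 fps fps"
  assumes "\<phi> $ 0 = 0" and "k < N"
  shows "subst_y P \<phi> $ k = (\<Sum>n<N. P $ n * \<phi> ^ n) $ k"
proof -
  have partial: "(\<Sum>n<N. P $ n * \<phi> ^ n) $ k = (\<Sum>n<Suc k. P $ n * \<phi> ^ n) $ k"
    if "k < N" for N k
    unfolding fps_sum_nth
    by (rule sum.mono_neutral_right) (use that assms(1) in \<open>auto simp: fps_mult_power_nth_below\<close>)
  define S where "S = Abs_fps (\<lambda>k. (\<Sum>n<Suc k. P $ n * \<phi> ^ n) $ k)"
  have "(\<lambda>n. P $ n * \<phi> ^ n) sums S"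
    by (rule fps_sums_if_partial_sums_nth_stable[of Suc]) (simp add: S_def partial)
  then have "subst_y P \<phi> = S"
    unfolding subst_y_def by (rule sums_unique[symmetric])
  then show ?thesis
    using partial assms(2) by (simp add: S_def)
qed

lemma fps_mult_nth_cong:
  assumes "\<And>j. j \<le> k \<Longrightarrow> f $ j = g $ j"
  shows "(h * f) $ k = (h * g) $ k"
  using assms by (simp add: fps_mult_nth)

lemma subst_y_horner:
  fixes P :: "'a::comm_ring_1 fps fps"
  assumes "\<phi> $ 0 = 0"
  shows "subst_y P \<phi> = P $ 0 + \<phi> * subst_y (fps_shift 1 P) \<phi>"
proof (rule fps_ext)
  fix k
  have tail: "(\<phi> * (\<Sum>n<Suc k. P $ Suc n * \<phi> ^ n)) $ k = (\<phi> * subst_y (fps_shift 1 P) \<phi>) $ k"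
    by (rule fps_mult_nth_cong) (simp add: subst_y_nth[OF assms, of _ "Suc k"] del: sum.lessThan_Suc)
  have "subst_y P \<phi> $ k = (\<Sum>n<Suc (Suc k). P $ n * \<phi> ^ n) $ k"
    by (rule subst_y_nth[OF assms]) simp
  also have "(\<Sum>n<Suc (Suc k). P $ n * \<phi> ^ n) = P $ 0 + \<phi> * (\<Sum>n<Suc k. P $ Suc n * \<phi> ^ n)"
    by (simp only: sum.lessThan_Suc_shift[of _ "Suc k"]) (simp add: sum_distrib_left algebra_simps)
  finally show "subst_y P \<phi> $ k = (P $ 0 + \<phi> * subst_y (fps_shift 1 P) \<phi>) $ k"
    by (simp only: fps_add_nth tail)
qed

lemma subst_y_const_mult:
  fixes P :: "'a::comm_ring_1 fps fps"
  assumes "\<phi> $ 0 = 0"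
  shows "subst_y (fps_const (fps_const a) * P) \<phi> = fps_const a * subst_y P \<phi>"
  by (rule fps_ext)
    (simp add: subst_y_nth[OF assms lessI] fps_sum_nth sum_distrib_left mult.assoc del: sum.lessThan_Suc)

lemma subst_y_factor:
  fixes P :: "'a::comm_ring_1 fps fps"
  assumes "\<phi> $ 0 = 0"
  obtains E where "P = fps_const (subst_y P \<phi>) + (fps_X - fps_const \<phi>) * E"
    and "E $ 0 $ 0 = P $ 1 $ 0"
proof
  define E where "E = Abs_fps (\<lambda>j. subst_y (fps_shift (Suc j) P) \<phi>)"
  have E_Suc: "E $ j = P $ Suc j + \<phi> * E $ Suc j" for j
  proof -
    have "fps_shift 1 (fps_shift (Suc j) P) = fps_shift (Suc (Suc j)) P"
      by (simp flip: fps_shift_fps_shift)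
    then show ?thesis
      using subst_y_horner[OF assms, of "fps_shift (Suc j) P"] by (simp add: E_def)
  qed
  have E_0: "subst_y P \<phi> = P $ 0 + \<phi> * E $ 0"
    using subst_y_horner[OF assms, of P] by (simp add: E_def)
  show "P = fps_const (subst_y P \<phi>) + (fps_X - fps_const \<phi>) * E"
  proof (rule fps_ext)
    fix n
    have nth: "((fps_X - fps_const \<phi>) * E) $ n = (if n = 0 then 0 else E $ (n - 1)) - \<phi> * E $ n"
      by (simp add: algebra_simps)
    show "P $ n = (fps_const (subst_y P \<phi>) + (fps_X - fps_const \<phi>) * E) $ n"
    proof (cases n)
      case 0
      then show ?thesis
        using nth E_0 by simp
    next
      case (Suc j)
      then show ?thesis
        using nth E_Suc[of j] by simp
    qed
  qed
  show "E $ 0 $ 0 = P $ 1 $ 0"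
    by (simp add: E_def subst_y_nth[OF assms, of 0 1])
qed

lemma weighted_order_ge_2_fps_X_minus:
  fixes D :: "'a::comm_ring_1 fps fps"
  assumes "D $ 0 $ 0 = 0" and "D $ 1 $ 0 = 1"
  shows "weighted_order_ge 2 (fps_X - D)"
  unfolding weighted_order_ge_def
proof (intro allI impI)
  fix n i :: nat
  assume "2 * i + n < 2"
  then have "i = 0" "n = 0 \<or> n = 1" by auto
  then show "(fps_X - D) $ n $ i = 0"
    using assms by auto
qed

lemma lagrange_partial_sums_nth:
  fixes D :: "'a::comm_ring_1 fps fps"
  assumes "\<phi> $ 0 = 0" and "subst_y D \<phi> = 0" and "D $ 1 $ 0 = 1" and "2 * i < M"
  shows "(\<Sum>m<M. (fps_deriv D * (fps_X - D) ^ Suc m) $ m) $ i = \<phi> $ i"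
proof -
  obtain E where "D = fps_const (subst_y D \<phi>) + (fps_X - fps_const \<phi>) * E"
    and E00: "E $ 0 $ 0 = D $ 1 $ 0"
    using subst_y_factor[OF assms(1)] .
  then have DE: "D = (fps_X - fps_const \<phi>) * E"
    using assms(2) by simp
  define W where "W = fps_right_inverse E (fps_right_inverse (E $ 0) 1)"
  have "E $ 0 * fps_right_inverse (E $ 0) 1 = 1"
    by (rule fps_right_inverse) (use E00 assms(3) in simp)
  then have "E * W = 1"
    unfolding W_def by (rule fps_right_inverse)
  then have DW: "D * W = fps_X - fps_const \<phi>"
    by (simp add: DE mult.assoc)
  have "D $ 0 $ 0 = 0"
    using subst_y_nth[OF assms(1), of 0 1 D] assms(2) by simp
  then have G: "weighted_order_ge 2 (fps_X - D)"
    using assms(3) by (rule weighted_order_ge_2_fps_X_minus)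
  have "(fps_const \<phi> * (fps_X - D) ^ Suc M) $ Suc M $ i = 0"
    by (rule weighted_order_ge_mult_power_nth[OF G]) (use assms(4) in simp)
  moreover have "(W * fps_deriv D * (fps_X - D) ^ Suc M) $ M $ i = 0"
    by (rule weighted_order_ge_mult_power_nth[OF G]) (use assms(4) in simp)
  ultimately show ?thesis
    unfolding lagrange_partial_sum_eq[OF DW] by simp
qed

theorem lagrange_inversion_sums:
  fixes D :: "'a::comm_ring_1 fps fps"
  assumes "\<phi> $ 0 = 0" and "subst_y D \<phi> = 0" and "D $ 1 $ 0 = 1"
  shows "(\<lambda>m. (fps_deriv D * (fps_X - D) ^ Suc m) $ m) sums \<phi>"
  by (rule fps_sums_if_partial_sums_nth_stable[of "\<lambda>i. Suc (2 * i)"])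
    (rule lagrange_partial_sums_nth[OF assms], simp)

lemma sum_of_nat_Suc_mult_diff:
  fixes f :: "nat \<Rightarrow> 'b::comm_ring_1"
  shows "(\<Sum>m<M. of_nat (Suc m) * (f m - f (Suc m))) = (\<Sum>m<M. f m) - of_nat M * f M"
  by (induction M) (simp_all add: algebra_simps)

lemma of_nat_Suc_neq_0_if_CHAR_0:
  assumes "CHAR('a::semiring_1) = 0"
  shows "of_nat (Suc k) \<noteq> (0 :: 'a)"
  unfolding of_nat_eq_0_iff_char_dvd using assms by simp

lemma fps_deriv_mult_power_Suc_nth:
  fixes G :: "'a::field fps fps"
  assumes "CHAR('a) = 0"
  shows "(fps_deriv G * G ^ Suc m) $ m
    = of_nat (Suc m) * (fps_const (1 / of_nat (Suc (Suc m))) * (G ^ Suc (Suc m)) $ Suc m)"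
proof -
  define k :: 'a where "k = of_nat (Suc (Suc m))"
  have "k \<noteq> 0"
    unfolding k_def by (rule of_nat_Suc_neq_0_if_CHAR_0[OF assms])
  have "fps_deriv (G ^ Suc (Suc m)) = of_nat (Suc (Suc m)) * (fps_deriv G * G ^ Suc m)"
    using fps_deriv_power'[of G "Suc (Suc m)"] by (simp only: diff_Suc_1 mult.assoc)
  then have "fps_const k * (fps_deriv G * G ^ Suc m) $ m = fps_deriv (G ^ Suc (Suc m)) $ m"
    by (simp only: k_def fps_mult_left_const_nth flip: fps_of_nat)
  also have "\<dots> = of_nat (Suc m) * (G ^ Suc (Suc m)) $ Suc m"
    by (simp del: power_Suc)
  finally have scaled: "fps_const k * (fps_deriv G * G ^ Suc m) $ m
      = of_nat (Suc m) * (G ^ Suc (Suc m)) $ Suc m" .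
  have "(fps_deriv G * G ^ Suc m) $ m = fps_const (1 / k) * (fps_const k * (fps_deriv G * G ^ Suc m) $ m)"
    using \<open>k \<noteq> 0\<close> by (simp flip: mult.assoc)
  also have "\<dots> = of_nat (Suc m) * (fps_const (1 / k) * (G ^ Suc (Suc m)) $ Suc m)"
    by (simp only: scaled mult.left_commute)
  finally show ?thesis
    unfolding k_def .
qed

theorem lagrange_inversion_sums_char_0:
  fixes D :: "'a::field fps fps"
  assumes "CHAR('a) = 0" and "\<phi> $ 0 = 0" and "subst_y D \<phi> = 0" and "D $ 1 $ 0 = 1"
  shows "(\<lambda>m. fps_const (1 / of_nat (Suc m)) * ((fps_X - D) ^ Suc m) $ m) sums \<phi>"
proof -
  define G where "G = fps_X - D"
  define v where "v m = fps_const (1 / of_nat (Suc m)) * (G ^ Suc m) $ m" for m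
  have power: "(G ^ Suc m) $ m = of_nat (Suc m) * v m" for m
    using of_nat_Suc_neq_0_if_CHAR_0[OF assms(1), of m]
    by (simp add: v_def del: of_nat_Suc flip: fps_of_nat)
  have "(fps_deriv D * G ^ Suc m) $ m = of_nat (Suc m) * (v m - v (Suc m))" for m
    using power[of m] fps_deriv_mult_power_Suc_nth[OF assms(1), of G m]
    unfolding v_def[of "Suc m"] by (simp add: G_def algebra_simps)
  then have partial: "(\<Sum>m<M. v m) = (\<Sum>m<M. (fps_deriv D * G ^ Suc m) $ m) + of_nat M * v M" for M
    by (simp only: sum_of_nat_Suc_mult_diff) simp
  have "D $ 0 $ 0 = 0"
    using subst_y_nth[OF assms(2), of 0 1 D] assms(3) by simp
  then have "weighted_order_ge 2 G"
    unfolding G_def using assms(4) by (rule weighted_order_ge_2_fps_X_minus)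
  then have "v M $ i = 0" if "2 * i < M" for i M
    using weighted_order_ge_mult_power_nth[of 2 G i M "Suc M" 1] that by (simp add: v_def)
  then have "(\<Sum>m<M. v m) $ i = \<phi> $ i" if "2 * i < M" for i M
    using lagrange_partial_sums_nth[OF assms(2-4) that] that
    by (simp add: partial G_def flip: fps_of_nat)
  then show ?thesis
    unfolding v_def G_def by (intro fps_sums_if_partial_sums_nth_stable[of "\<lambda>i. Suc (2 * i)"]) simp
qed

lemma lagrange_terms_rescale:
  fixes P :: "'a::field fps fps"
  assumes "\<alpha> \<noteq> 0"
  defines "D \<equiv> fps_const (fps_const (1 / \<alpha>)) * P"
    and "Q \<equiv> fps_const (fps_const \<alpha>) * fps_X - P"
  shows "(fps_deriv D * (fps_X - D) ^ Suc m) $ m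
      = fps_const (1 / \<alpha> ^ (m + 2)) * (fps_deriv P * Q ^ (m + 1)) $ m"
    and "fps_const (1 / of_nat (Suc m)) * ((fps_X - D) ^ Suc m) $ m
      = fps_const (1 / (of_nat (m + 1) * \<alpha> ^ (m + 1))) * (Q ^ (m + 1)) $ m"
proof -
  define c :: "'a fps fps" where "c = fps_const (fps_const (1 / \<alpha>))"
  have "c * fps_const (fps_const \<alpha>) = 1"
    using assms(1) by (simp add: c_def)
  then have X_minus_D: "fps_X - D = c * Q"
    by (simp add: D_def Q_def c_def right_diff_distrib flip: mult.assoc)
  have c_power: "c ^ k = fps_const (fps_const (1 / \<alpha> ^ k))" for k
    by (simp add: c_def power_one_over)
  have "fps_deriv D = c * fps_deriv P"
    by (simp add: D_def c_def)
  then have "fps_deriv D * (fps_X - D) ^ Suc m = c ^ (m + 2) * (fps_deriv P * Q ^ (m + 1))"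
    and "(fps_X - D) ^ Suc m = c ^ (m + 1) * Q ^ (m + 1)"
    by (simp_all add: X_minus_D power_mult_distrib mult_ac)
  then show "(fps_deriv D * (fps_X - D) ^ Suc m) $ m
      = fps_const (1 / \<alpha> ^ (m + 2)) * (fps_deriv P * Q ^ (m + 1)) $ m"
    and "fps_const (1 / of_nat (Suc m)) * ((fps_X - D) ^ Suc m) $ m
      = fps_const (1 / (of_nat (m + 1) * \<alpha> ^ (m + 1))) * (Q ^ (m + 1)) $ m"
    by (simp_all only: c_power fps_mult_left_const_nth) (simp add: mult.commute)
qed

theorem corollary3p2:
  fixes P :: "'a::field fps fps" and \<phi> :: "'a fps" and \<alpha> :: 'a
  assumes "fps_nth \<phi> 0 = 0"
    and "subst_y P \<phi> = 0"
    and "fps_nth (fps_nth (fps_deriv P) 0) 0 = \<alpha>"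
    and "\<alpha> \<noteq> 0"
  shows "((\<lambda>m. fps_const (1 / \<alpha> ^ (m + 2)) *
            fps_nth (fps_deriv P * (fps_const (fps_const \<alpha>) * fps_X - P) ^ (m + 1)) m)
          sums \<phi>)
       \<and> (CHAR('a) = 0 \<longrightarrow>
          ((\<lambda>m. fps_const (1 / (of_nat (m + 1) * \<alpha> ^ (m + 1))) *
            fps_nth ((fps_const (fps_const \<alpha>) * fps_X - P) ^ (m + 1)) m) sums \<phi>))"
proof -
  define D where "D = fps_const (fps_const (1 / \<alpha>)) * P"
  have subst: "subst_y D \<phi> = 0"
    using assms(1,2) by (simp add: D_def subst_y_const_mult)
  have D_1_0: "D $ 1 $ 0 = 1"
    using assms(3,4) by (simp add: D_def)
  have "(\<lambda>m. fps_const (1 / \<alpha> ^ (m + 2)) *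
      (fps_deriv P * (fps_const (fps_const \<alpha>) * fps_X - P) ^ (m + 1)) $ m) sums \<phi>"
    using lagrange_inversion_sums[OF assms(1) subst D_1_0]
    unfolding D_def lagrange_terms_rescale[OF assms(4)] .
  moreover have "(\<lambda>m. fps_const (1 / (of_nat (m + 1) * \<alpha> ^ (m + 1))) *
      ((fps_const (fps_const \<alpha>) * fps_X - P) ^ (m + 1)) $ m) sums \<phi>" if "CHAR('a) = 0"
    using lagrange_inversion_sums_char_0[OF that assms(1) subst D_1_0]
    unfolding D_def lagrange_terms_rescale[OF assms(4)] .
  ultimately show ?thesis
    by blast
qed

end
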